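(* Let $n\ge1$ and let $\tilde d_1$ be a metric on $\mathbb R^n$ for which there exists a continuous function $f:[0,\infty)\to[0,\infty)$ with $f(1)=1$ and $\tilde d_1(ax,x)=f(|ax-x|)$ for all $x\in\mathbb R^n$ and all $a\ge0$. Then the following are equivalent: (i) $\tilde d_1=d_1$; (ii) $\mathcal C_{\tilde d_1}(P_1,P_2)=\mathcal C_{d_1}(P_1,P_2)$ for all $P_1,P_2\in\mathbb R^n$.
   Context: $|\cdot|$ is the Euclidean norm. The radial metric $d_1$ on $\mathbb R^n$ is $d_1(A,B)=|A-B|$ if $A=aB$ for some $a\in\mathbb R$, and $d_1(A,B)=|A|+|B|$ otherwise. For a metric $d$ on a set $M$ and $A,B\in M$, $\mathcal C_d(A,B)=\{X\in M:\ d(X,A)=d(X,B)+d(A,B)<+\infty\}$. *)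

theory Defs
  imports "HOL-Analysis.Analysis"
begin

definition is_metric :: "('a \<Rightarrow> 'a \<Rightarrow> real) \<Rightarrow> bool" where
  "is_metric d \<longleftrightarrow>
     (\<forall>x y. d x y \<ge> 0) \<and>
     (\<forall>x y. d x y = 0 \<longleftrightarrow> x = y) \<and>
     (\<forall>x y. d x y = d y x) \<and>
     (\<forall>x y z. d x z \<le> d x y + d y z)"

definition radial_metric :: "'a::real_normed_vector \<Rightarrow> 'a \<Rightarrow> real" where
  "radial_metric A B = (if \<exists>a::real. A = a *\<^sub>R B then norm (A - B) else norm A + norm B)"

definition metric_C :: "('a \<Rightarrow> 'a \<Rightarrow> real) \<Rightarrow> 'a \<Rightarrow> 'a \<Rightarrow> 'a set" where
  "metric_C d A B = {X. d X A = d X B + d A B}"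

end

theory Submission
  imports Defs
begin

text \<open>
  On a ray every point lies between two others in the sense of \<open>d\<^sub>1\<close>, so if \<open>\<tilde>d\<^sub>1\<close> has
  the same sets \<open>\<C>\<close> as \<open>d\<^sub>1\<close>, the profile \<open>f\<close> is additive on \<open>[0,\<infinity>)\<close>; being also nonnegative,
  it is monotone and hence linear, and \<open>f 1 = 1\<close> makes \<open>\<tilde>d\<^sub>1\<close> agree with \<open>d\<^sub>1\<close> on rays.
  Off rays, \<open>d\<^sub>1(A,B) = d\<^sub>1(A,0) + d\<^sub>1(B,0)\<close>; this betweenness passes to \<open>\<tilde>d\<^sub>1\<close>, whose
  distances to \<open>0\<close> are already known.
\<close>

lemma additive_nonneg_imp_linear:
  fixes f :: "real \<Rightarrow> real"
  assumes add: "\<And>u v. u \<ge> 0 \<Longrightarrow> v \<ge> 0 \<Longrightarrow> f (u + v) = f u + f v"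
    and nonneg: "\<And>t. t \<ge> 0 \<Longrightarrow> f t \<ge> 0"
    and "s \<ge> 0"
  shows "f s = f 1 * s"
proof -
  have f0: "f 0 = 0" using add[of 0 0] by simp
  have mult: "f (real n * u) = real n * f u" if "u \<ge> 0" for n u
  proof (induction n)
    case 0 then show ?case using f0 by simp
  next
    case (Suc n)
    have "f (real (Suc n) * u) = f (real n * u + u)" by (simp add: algebra_simps)
    also have "\<dots> = f (real n * u) + f u" using add that by simp
    finally show ?case using Suc by (simp add: algebra_simps)
  qed
  have mono: "f u \<le> f v" if "0 \<le> u" "u \<le> v" for u v
    using add[of u "v - u"] nonneg[of "v - u"] that by simp
  have bound: "real n * \<bar>f s - f 1 * s\<bar> \<le> f 1" for n :: nat
  proof -
    define k where "k = nat \<lfloor>real n * s\<rfloor>"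
    have "0 \<le> real n * s" using \<open>s \<ge> 0\<close> by simp
    then have k: "real k \<le> real n * s" "real n * s \<le> real k + 1"
      unfolding k_def by linarith+
    have "real k * f 1 \<le> real n * f s"
      using mono[of "real k" "real n * s"] k mult[of 1 k] mult[of s n] \<open>s \<ge> 0\<close> by simp
    moreover have "real n * f s \<le> (real k + 1) * f 1"
      using mono[of "real n * s" "real k + 1"] k mult[of 1 "k + 1"] mult[of s n] \<open>s \<ge> 0\<close>
      by (simp add: ac_simps)
    moreover have "real k * f 1 \<le> real n * s * f 1" "real n * s * f 1 \<le> (real k + 1) * f 1"
      using k nonneg[of 1] by (simp_all add: mult_right_mono)
    ultimately have "f 1 \<ge> \<bar>real n * f s - real n * s * f 1\<bar>"
      by (simp add: abs_le_iff distrib_right)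
    also have "\<bar>real n * f s - real n * s * f 1\<bar> = real n * \<bar>f s - f 1 * s\<bar>"
      by (metis abs_mult abs_of_nat mult.assoc mult.commute right_diff_distrib)
    finally show ?thesis .
  qed
  show ?thesis
  proof (rule ccontr)
    assume "f s \<noteq> f 1 * s"
    then obtain n :: nat where "f 1 < real n * \<bar>f s - f 1 * s\<bar>"
      using reals_Archimedean3[of "\<bar>f s - f 1 * s\<bar>"] by auto
    with bound[of n] show False by simp
  qed
qed

lemma radial_metric_nonneg_multiple:
  "a \<ge> 0 \<Longrightarrow> radial_metric (a *\<^sub>R B) B = norm (a *\<^sub>R B - B)"
  unfolding radial_metric_def by auto

lemma radial_metric_not_nonneg_multiple:
  fixes A B :: "'a::real_normed_vector"
  assumes "\<nexists>a. a \<ge> 0 \<and> A = a *\<^sub>R B"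
  shows "radial_metric A B = norm A + norm B"
proof (cases "\<exists>a. A = a *\<^sub>R B")
  case True
  then obtain a where a: "A = a *\<^sub>R B" by blast
  have "a < 0" using assms a not_le by blast
  have "norm (A - B) = norm ((a - 1) *\<^sub>R B)" using a by (simp add: algebra_simps)
  also have "\<dots> = (1 - a) * norm B" using \<open>a < 0\<close> by simp
  also have "\<dots> = norm A + norm B" using a \<open>a < 0\<close> by (simp add: algebra_simps)
  finally show ?thesis using True unfolding radial_metric_def by simp
qed (simp add: radial_metric_def)

lemma radial_metric_zero_right: "radial_metric X 0 = norm X"
  unfolding radial_metric_def by auto

lemma radial_metric_ray:
  fixes e :: "'a::real_normed_vector"
  assumes "norm e = 1" "s \<ge> 0" "r > 0"
  shows "radial_metric (s *\<^sub>R e) (r *\<^sub>R e) = \<bar>s - r\<bar>"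
proof -
  have "s *\<^sub>R e - r *\<^sub>R e = (s - r) *\<^sub>R e" by (simp add: algebra_simps)
  then show ?thesis
    using radial_metric_nonneg_multiple[of "s / r" "r *\<^sub>R e"] assms by simp
qed

lemma metric_C_eqD:
  assumes "metric_C d P Q = metric_C d' P Q" "d' X P = d' X Q + d' P Q"
  shows "d X P = d X Q + d P Q"
  using assms unfolding metric_C_def by blast

lemma ray_profile_additive:
  fixes dt :: "'a::real_normed_vector \<Rightarrow> 'a \<Rightarrow> real" and e :: 'a
  assumes C: "\<And>P Q. metric_C dt P Q = metric_C radial_metric P Q"
    and ray: "\<And>x a. a \<ge> 0 \<Longrightarrow> dt (a *\<^sub>R x) x = f (norm (a *\<^sub>R x - x))"
    and e: "norm e = 1" and "u \<ge> 0" "v \<ge> 0"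
  shows "f (u + v) = f u + f v"
proof -
  have dt_ray: "dt (s *\<^sub>R e) (r *\<^sub>R e) = f \<bar>s - r\<bar>" if "s \<ge> 0" "r > 0" for s r
  proof -
    have "s *\<^sub>R e = (s / r) *\<^sub>R (r *\<^sub>R e)" "s *\<^sub>R e - r *\<^sub>R e = (s - r) *\<^sub>R e"
      using that by (simp_all add: algebra_simps)
    then show ?thesis using ray[of "s / r" "r *\<^sub>R e"] that e by simp
  qed
  define c where "c = u + 1"
  define b where "b = u + 1 + v"
  have "c > 0" "b > 0" using \<open>u \<ge> 0\<close> \<open>v \<ge> 0\<close> unfolding c_def b_def by auto
  \<comment> \<open>\<open>c \<cdot> e\<close> lies between \<open>e\<close> and \<open>b \<cdot> e\<close>\<close>
  have "radial_metric (1 *\<^sub>R e) (b *\<^sub>R e)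
      = radial_metric (1 *\<^sub>R e) (c *\<^sub>R e) + radial_metric (b *\<^sub>R e) (c *\<^sub>R e)"
    using radial_metric_ray[OF e, of 1 b] radial_metric_ray[OF e, of 1 c]
      radial_metric_ray[OF e, of b c] \<open>c > 0\<close> \<open>b > 0\<close> \<open>u \<ge> 0\<close> \<open>v \<ge> 0\<close>
    unfolding c_def b_def by simp
  then have "dt (1 *\<^sub>R e) (b *\<^sub>R e) = dt (1 *\<^sub>R e) (c *\<^sub>R e) + dt (b *\<^sub>R e) (c *\<^sub>R e)"
    using metric_C_eqD[OF C] by blast
  then have "f \<bar>1 - b\<bar> = f \<bar>1 - c\<bar> + f \<bar>b - c\<bar>"
    using dt_ray[of 1 b] dt_ray[of 1 c] dt_ray[of b c] \<open>c > 0\<close> \<open>b > 0\<close> by simp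
  then show ?thesis unfolding b_def c_def using \<open>u \<ge> 0\<close> \<open>v \<ge> 0\<close> by (simp add: add.commute)
qed

lemma eq_radial_metric_if_metric_C_eq:
  fixes dt :: "'a::real_normed_vector \<Rightarrow> 'a \<Rightarrow> real"
  assumes "is_metric dt"
    and C: "\<And>P Q. metric_C dt P Q = metric_C radial_metric P Q"
    and ray: "\<And>x a. a \<ge> 0 \<Longrightarrow> dt (a *\<^sub>R x) x = norm (a *\<^sub>R x - x)"
  shows "dt = radial_metric"
proof (intro ext)
  fix A B :: 'a
  have dt_zero_right: "dt X 0 = norm X" for X
  proof -
    have "dt 0 X = norm X" using ray[of 0 X] by simp
    then show ?thesis using \<open>is_metric dt\<close> unfolding is_metric_def by metis
  qed
  show "dt A B = radial_metric A B"
  proof (cases "\<exists>a. a \<ge> 0 \<and> A = a *\<^sub>R B")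
    case True
    then obtain a where "a \<ge> 0" "A = a *\<^sub>R B" by blast
    then show ?thesis using ray[of a B] radial_metric_nonneg_multiple[of a B] by simp
  next
    case False
    then have "radial_metric A B = radial_metric A 0 + radial_metric B 0"
      using radial_metric_not_nonneg_multiple radial_metric_zero_right by metis
    then have "dt A B = dt A 0 + dt B 0" using metric_C_eqD[OF C] by blast
    then show ?thesis
      using False radial_metric_not_nonneg_multiple dt_zero_right by metis
  qed
qed

theorem theorem3p2:
  fixes dt :: "'a::euclidean_space \<Rightarrow> 'a \<Rightarrow> real"
    and f :: "real \<Rightarrow> real"
  assumes "is_metric dt"
    and "continuous_on {0..} f"
    and "\<forall>t\<ge>0. f t \<ge> 0"
    and "f 1 = 1"
    and "\<forall>x. \<forall>a::real\<ge>0. dt (a *\<^sub>R x) x = f (norm (a *\<^sub>R x - x))"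
  shows "dt = radial_metric \<longleftrightarrow>
         (\<forall>P1 P2. metric_C dt P1 P2 = metric_C radial_metric P1 P2)"
proof
  assume C: "\<forall>P1 P2. metric_C dt P1 P2 = metric_C radial_metric P1 P2"
  obtain e :: 'a where "e \<in> Basis" using nonempty_Basis by blast
  then have "norm e = 1" by simp
  have "f s = s" if "s \<ge> 0" for s
    using additive_nonneg_imp_linear[of f s] ray_profile_additive[of dt f e] C assms(3-5)
      \<open>norm e = 1\<close> that by auto
  then show "dt = radial_metric"
    using eq_radial_metric_if_metric_C_eq[OF assms(1)] C assms(5) by simp
qed simp

end
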